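(* Let $(E,\tau)$ be a convex space. Then $(E,\tau)$ is uniquely generated (in the sense that every $X\subseteq E$ has exactly one inclusion-minimal subset $B\subseteq X$ with $\tau(B)=\tau(X)$) if and only if $\tau(X)=\tau(EX(X))$ for every $X\subseteq E$, where $EX(X)=\{x\in X:\tau(X)\neq\tau(X-\{x\})\}$.
   Context: $E$ is a finite set and $\tau:2^E\to 2^E$. $(E,\tau)$ is a convex space if (C1) $Y\subseteq\tau(Y)$ for all $Y\subseteq E$, and (convexity) for all $Y_1\subseteq Y_2\subseteq Y_3\subseteq E$ with $\tau(Y_1)=\tau(Y_3)$ we have $\tau(Y_2)=\tau(Y_1)$. *)

theory Defs
  imports Main
begin

definition convex_space :: "'a set \<Rightarrow> ('a set \<Rightarrow> 'a set) \<Rightarrow> bool" where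
  "convex_space E \<tau> \<longleftrightarrow> finite E \<and>
     (\<forall>Y. Y \<subseteq> E \<longrightarrow> Y \<subseteq> \<tau> Y \<and> \<tau> Y \<subseteq> E) \<and>
     (\<forall>Y1 Y2 Y3. Y1 \<subseteq> Y2 \<and> Y2 \<subseteq> Y3 \<and> Y3 \<subseteq> E \<and> \<tau> Y1 = \<tau> Y3 \<longrightarrow> \<tau> Y2 = \<tau> Y1)"

definition minimal_generator :: "('a set \<Rightarrow> 'a set) \<Rightarrow> 'a set \<Rightarrow> 'a set \<Rightarrow> bool" where
  "minimal_generator \<tau> X B \<longleftrightarrow> B \<subseteq> X \<and> \<tau> B = \<tau> X \<and>
     (\<forall>B'. B' \<subset> B \<longrightarrow> \<tau> B' \<noteq> \<tau> X)"

definition uniquely_generated :: "'a set \<Rightarrow> ('a set \<Rightarrow> 'a set) \<Rightarrow> bool" where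
  "uniquely_generated E \<tau> \<longleftrightarrow> (\<forall>X. X \<subseteq> E \<longrightarrow> (\<exists>!B. minimal_generator \<tau> X B))"

definition EX_pts :: "('a set \<Rightarrow> 'a set) \<Rightarrow> 'a set \<Rightarrow> 'a set" where
  "EX_pts \<tau> X = {x \<in> X. \<tau> X \<noteq> \<tau> (X - {x})}"

end

theory Submission
  imports Defs
begin

text \<open>By convexity, every generator \<open>B \<subseteq> X\<close> of \<open>\<tau> X\<close> contains every extreme point \<open>x\<close> of \<open>X\<close>:
  otherwise \<open>B \<subseteq> X - {x} \<subseteq> X\<close> would force \<open>\<tau> (X - {x}) = \<tau> X\<close>. Hence if the extreme points
  generate \<open>\<tau> X\<close>, they form the least generator and so the unique minimal one. Conversely,
  if some non-extreme \<open>x\<close> lay in the unique minimal generator, a minimal generator of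
  \<open>X - {x}\<close> would be a second minimal generator of \<open>X\<close>; so the unique minimal generator
  consists of extreme points and therefore equals \<open>EX_pts \<tau> X\<close>.\<close>

lemma EX_pts_subset: "EX_pts \<tau> X \<subseteq> X"
  unfolding EX_pts_def by blast

lemma EX_pts_subset_generator:
  assumes "convex_space E \<tau>" "X \<subseteq> E" "B \<subseteq> X" "\<tau> B = \<tau> X"
  shows "EX_pts \<tau> X \<subseteq> B"
proof
  fix x assume x: "x \<in> EX_pts \<tau> X"
  show "x \<in> B"
  proof (rule ccontr)
    assume "x \<notin> B"
    with assms(3) have "B \<subseteq> X - {x}" by blast
    with assms have "\<tau> (X - {x}) = \<tau> B"
      unfolding convex_space_def by (metis Diff_subset)
    with x assms(4) show False unfolding EX_pts_def by simp
  qed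
qed

lemma minimal_generator_exists:
  assumes "finite X"
  shows "\<exists>B. minimal_generator \<tau> X B"
proof -
  let ?G = "{B. B \<subseteq> X \<and> \<tau> B = \<tau> X}"
  have "finite ?G" using assms by simp
  moreover have "X \<in> ?G" by simp
  ultimately have "\<exists>B\<in>?G. \<not> (\<exists>B'\<in>?G. B' < B)"
    by (intro ex_min_if_finite) auto
  then obtain B where "B \<in> ?G" "\<not> (\<exists>B'\<in>?G. B' < B)" ..
  then have "minimal_generator \<tau> X B"
    unfolding minimal_generator_def by auto
  then show ?thesis ..
qed

lemma minimal_generator_of_equivalent_subset:
  assumes "Y \<subseteq> X" "\<tau> Y = \<tau> X" "minimal_generator \<tau> Y B"
  shows "minimal_generator \<tau> X B"
  using assms unfolding minimal_generator_def by auto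

lemma EX_pts_generates_if_unique_minimal_generator:
  assumes E: "convex_space E \<tau>" and X: "X \<subseteq> E"
    and unique: "\<exists>!B. minimal_generator \<tau> X B"
  shows "\<tau> (EX_pts \<tau> X) = \<tau> X"
proof -
  obtain B where B: "minimal_generator \<tau> X B" using unique by blast
  have "B \<subseteq> EX_pts \<tau> X"
  proof
    fix x assume xB: "x \<in> B"
    show "x \<in> EX_pts \<tau> X"
    proof (rule ccontr)
      assume "x \<notin> EX_pts \<tau> X"
      moreover have "x \<in> X" using xB B unfolding minimal_generator_def by blast
      ultimately have eq: "\<tau> (X - {x}) = \<tau> X" unfolding EX_pts_def by simp
      have "finite (X - {x})"
        using E X unfolding convex_space_def by (meson finite_Diff finite_subset)
      then obtain C where C: "minimal_generator \<tau> (X - {x}) C"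
        using minimal_generator_exists by blast
      then have "minimal_generator \<tau> X C"
        using minimal_generator_of_equivalent_subset[of "X - {x}" X] eq by blast
      with unique B have "C = B" by blast
      with C xB show False unfolding minimal_generator_def by blast
    qed
  qed
  moreover have "EX_pts \<tau> X \<subseteq> B"
    using B EX_pts_subset_generator[OF E X, of B] unfolding minimal_generator_def by blast
  ultimately show ?thesis
    using B unfolding minimal_generator_def by simp
qed

lemma unique_minimal_generator_if_EX_pts_generates:
  assumes E: "convex_space E \<tau>" and X: "X \<subseteq> E"
    and gen: "\<tau> (EX_pts \<tau> X) = \<tau> X"
  shows "\<exists>!B. minimal_generator \<tau> X B"
proof -
  have least: "EX_pts \<tau> X \<subseteq> B" if "minimal_generator \<tau> X B" for B
    using that EX_pts_subset_generator[OF E X, of B] unfolding minimal_generator_def by blast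
  have min: "minimal_generator \<tau> X (EX_pts \<tau> X)"
    unfolding minimal_generator_def
  proof (intro conjI allI impI EX_pts_subset gen)
    fix B assume B: "B \<subset> EX_pts \<tau> X"
    show "\<tau> B \<noteq> \<tau> X"
    proof
      assume "\<tau> B = \<tau> X"
      moreover have "B \<subseteq> X" using B EX_pts_subset[of \<tau> X] by blast
      ultimately have "EX_pts \<tau> X \<subseteq> B"
        using EX_pts_subset_generator[OF E X, of B] by blast
      with B show False by blast
    qed
  qed
  show ?thesis
  proof (rule ex1I)
    show "minimal_generator \<tau> X (EX_pts \<tau> X)" by (rule min)
  next
    fix C assume C: "minimal_generator \<tau> X C"
    then have "EX_pts \<tau> X \<subseteq> C" by (rule least)
    moreover have "\<not> EX_pts \<tau> X \<subset> C" using C min unfolding minimal_generator_def by blast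
    ultimately show "C = EX_pts \<tau> X" by blast
  qed
qed

theorem mainTheorem15:
  assumes "convex_space E \<tau>"
  shows "uniquely_generated E \<tau> \<longleftrightarrow> (\<forall>X. X \<subseteq> E \<longrightarrow> \<tau> X = \<tau> (EX_pts \<tau> X))"
  unfolding uniquely_generated_def
  using EX_pts_generates_if_unique_minimal_generator[OF assms]
    unique_minimal_generator_if_EX_pts_generates[OF assms]
  by (metis (no_types))

end
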